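(* Let $Z=\mathbb R/\mathbb Z\times\mathbb R$ be the standard cylinder with universal covering $p_Z:\mathbb R^2\to Z$, $(x,y)\mapsto(x\bmod 1,y)$, and let $c$ be a closed curve in $Z$. If $c^2$ has a simple lift in $\mathbb R^2$, then every lift of $c^\infty$ in $\mathbb R^2$ is simple.
   Context: A closed curve is a continuous map $c:\mathbb R/\mathbb Z\to Z$; $c^2$ is the concatenation of two copies of $c$, and $c^\infty:\mathbb R\to Z$ is the composition of $c$ with the projection $\mathbb R\to\mathbb R/\mathbb Z$. A curve $\gamma:[0,1]\to X$ is simple if $\gamma(i)\neq\gamma(j)$ for all $i<j$ with $(i,j)\neq(0,1)$; a curve defined on $\mathbb R$ is simple if it is injective. A lift of a curve $\gamma$ is a curve $\widetilde\gamma$ with $p_Z\circ\widetilde\gamma=\gamma$. *)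

theory Defs
  imports "HOL-Analysis.Analysis"
begin

text \<open>The cylinder Z = R/Z x R is modelled (homeomorphically) as the subset
  sphere 0 1 x UNIV of complex x real; the covering map is
  p_Z(x,y) = (exp(2 pi i x), y).\<close>

definition pZ :: "real \<times> real \<Rightarrow> complex \<times> real" where
  "pZ = (\<lambda>(x, y). (cis (2 * pi * x), y))"

definition cylinder :: "(complex \<times> real) set" where
  "cylinder = range pZ"

text \<open>A closed curve R/Z -> Z is represented as a closed path c on [0,1]
  (c 0 = c 1). Its square is the concatenation c +++ c, and
  c^\<infinity> : R -> Z is c composed with the projection R -> R/Z.\<close>

definition curve_inf :: "(real \<Rightarrow> 'a) \<Rightarrow> real \<Rightarrow> 'a" where
  "curve_inf c t = c (frac t)"

end

theory Submission
  imports Defs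
begin

text \<open>Identify \<open>\<real>\<^sup>2\<close> with \<open>\<complex>\<close>. A lift \<open>l\<close> of \<open>c\<^sup>\<infinity>\<close> satisfies \<open>l (t + 1) = l t + v\<close>, and
  because \<open>c\<^sup>2\<close> has a simple lift, \<open>l\<close> is injective on \<open>[0, 2]\<close> up to the endpoints. So if \<open>l\<close>
  is not injective, it has a shortest return time \<open>d > 1\<close>, \<open>l (x + d) = l x\<close>, and \<open>l\<close> traces a
  simple closed curve \<open>G\<close> on \<open>[x, x + d]\<close>. For a simple closed curve, the secant
  \<open>t \<mapsto> G (t + r) - G t\<close> has nonzero winding number around \<open>0\<close> for every \<open>0 < r < d\<close>:
  deforming \<open>r\<close> to \<open>d/2\<close> makes it antipodal. For \<open>r = 1\<close>, however, the secant is the constant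
  \<open>v\<close> on \<open>[0, d - 1]\<close>, and on \<open>[d - 1, d]\<close> it is a secant of \<open>l\<close> of length \<open>d - 1\<close> over one
  period, which deforms through secant lengths in \<open>(0, d)\<close> to the constant secant of length
  \<open>1\<close>; so its winding number vanishes.\<close>

lemma Ints_valued_continuous_constant:
  fixes h :: "'a::topological_space \<Rightarrow> 'b::real_normed_div_algebra"
  assumes "connected S" "continuous_on S h" "\<And>z. z \<in> S \<Longrightarrow> h z \<in> \<int>" "a \<in> S" "b \<in> S"
  shows "h a = h b"
proof -
  have "h constant_on S"
  proof (rule continuous_discrete_range_constant[OF assms(1,2)])
    fix x assume "x \<in> S"
    show "\<exists>e>0. \<forall>y. y \<in> S \<and> h y \<noteq> h x \<longrightarrow> e \<le> norm (h y - h x)"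
    proof (intro exI[of _ 1] conjI allI impI)
      fix y assume y: "y \<in> S \<and> h y \<noteq> h x"
      then obtain m n where "h y = of_int m" "h x = of_int n" "m \<noteq> n"
        using assms(3) \<open>x \<in> S\<close> by (metis Ints_cases)
      then show "1 \<le> norm (h y - h x)"
        by (simp flip: of_int_diff)
    qed simp
  qed
  then show ?thesis using assms(4,5) by (auto simp: constant_on_def)
qed

lemma exp_eq_1_continuous_constant:
  fixes h :: "'a::topological_space \<Rightarrow> complex"
  assumes "connected S" "continuous_on S h" "\<And>z. z \<in> S \<Longrightarrow> exp (h z) = 1" "a \<in> S" "b \<in> S"
  shows "h a = h b"
proof -
  have "h z / (2 * pi * \<i>) \<in> \<int>" if z: "z \<in> S" for z
  proof -
    obtain n :: int where "Re (h z) = 0" "Im (h z) = of_int (2 * n) * pi"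
      using assms(3)[OF z] by (auto simp: exp_eq_1)
    then have "h z = of_int n * (2 * pi * \<i>)"
      by (simp add: complex_eq_iff)
    then show ?thesis by simp
  qed
  then have "h a / (2 * pi * \<i>) = h b / (2 * pi * \<i>)"
    by (intro Ints_valued_continuous_constant[OF assms(1) _ _ assms(4,5)] continuous_intros assms(2)) auto
  then show ?thesis by simp
qed

lemma continuous_logarithm_on_convex:
  fixes f :: "'a::real_normed_vector \<Rightarrow> complex"
  assumes "convex S" "continuous_on S f" "\<And>z. z \<in> S \<Longrightarrow> f z \<noteq> 0"
  obtains g where "continuous_on S g" "\<And>z. z \<in> S \<Longrightarrow> f z = exp (g z)"
  using continuous_logarithm_on_contractible[OF assms(2) convex_imp_contractible[OF assms(1)] assms(3)]
  by blast

lemma continuous_logarithm_on_interval: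
  fixes f :: "real \<Rightarrow> complex"
  assumes "continuous_on {a..b} f" "\<And>t. t \<in> {a..b} \<Longrightarrow> f t \<noteq> 0"
  obtains L where "continuous_on {a..b} L" "\<And>t. t \<in> {a..b} \<Longrightarrow> f t = exp (L t)"
  using continuous_logarithm_on_convex[of "{a..b}" f] assms by auto

text \<open>Meaningful only when \<open>f\<close> is continuous and nonvanishing on \<open>[a, b]\<close>; when moreover
  \<open>f a = f b\<close>, it is \<open>2\<pi>i\<close> times the winding number of \<open>f\<close> around \<open>0\<close>.\<close>

definition log_increment :: "(real \<Rightarrow> complex) \<Rightarrow> real \<Rightarrow> real \<Rightarrow> complex" where
  "log_increment f a b =
     (SOME \<delta>. \<exists>L. continuous_on {a..b} L \<and> (\<forall>t\<in>{a..b}. f t = exp (L t)) \<and> \<delta> = L b - L a)"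

lemma log_increment_eq:
  assumes "a \<le> b" "continuous_on {a..b} L" "\<And>t. t \<in> {a..b} \<Longrightarrow> f t = exp (L t)"
  shows "log_increment f a b = L b - L a"
  unfolding log_increment_def
proof (rule some_equality)
  show "\<exists>L'. continuous_on {a..b} L' \<and> (\<forall>t\<in>{a..b}. f t = exp (L' t)) \<and> L b - L a = L' b - L' a"
    using assms by blast
next
  fix \<delta> assume "\<exists>L'. continuous_on {a..b} L' \<and> (\<forall>t\<in>{a..b}. f t = exp (L' t)) \<and> \<delta> = L' b - L' a"
  then obtain L' where L': "continuous_on {a..b} L'" "\<And>t. t \<in> {a..b} \<Longrightarrow> f t = exp (L' t)"
    and \<delta>: "\<delta> = L' b - L' a"
    by blast
  have "L' b - L b = L' a - L a"
  proof (rule exp_eq_1_continuous_constant[of "{a..b}"])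
    show "continuous_on {a..b} (\<lambda>t. L' t - L t)"
      by (intro continuous_intros L' assms(2))
    show "exp (L' t - L t) = 1" if "t \<in> {a..b}" for t
      using L'(2)[OF that] assms(3)[OF that] by (simp add: exp_diff)
  qed (use assms(1) in auto)
  moreover have "\<delta> = (L' b - L b) - (L' a - L a) + (L b - L a)"
    using \<delta> by simp
  ultimately show "\<delta> = L b - L a"
    by simp
qed

lemma exp_log_increment:
  assumes "a \<le> b" "continuous_on {a..b} f" "\<And>t. t \<in> {a..b} \<Longrightarrow> f t \<noteq> 0"
  shows "exp (log_increment f a b) = f b / f a"
proof -
  obtain L where L: "continuous_on {a..b} L" "\<And>t. t \<in> {a..b} \<Longrightarrow> f t = exp (L t)"
    using continuous_logarithm_on_interval[OF assms(2,3)] by blast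
  have "log_increment f a b = L b - L a"
    by (rule log_increment_eq[OF assms(1) L])
  then show ?thesis
    using L(2)[of a] L(2)[of b] assms(1) by (simp add: exp_diff)
qed

lemma log_increment_add:
  assumes "a \<le> b" "b \<le> c" "continuous_on {a..c} f" "\<And>t. t \<in> {a..c} \<Longrightarrow> f t \<noteq> 0"
  shows "log_increment f a c = log_increment f a b + log_increment f b c"
proof -
  obtain L where L: "continuous_on {a..c} L" "\<And>t. t \<in> {a..c} \<Longrightarrow> f t = exp (L t)"
    using continuous_logarithm_on_interval[OF assms(3,4)] by blast
  have "log_increment f a c = L c - L a"
    by (rule log_increment_eq[OF _ L]) (use assms(1,2) in simp)
  moreover have "log_increment f a b = L b - L a"
    by (rule log_increment_eq[OF assms(1) continuous_on_subset[OF L(1)]]) (use assms(2) L(2) in auto)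
  moreover have "log_increment f b c = L c - L b"
    by (rule log_increment_eq[OF assms(2) continuous_on_subset[OF L(1)]]) (use assms(1) L(2) in auto)
  ultimately show ?thesis
    by simp
qed

lemma log_increment_const:
  assumes "a \<le> b" "z \<noteq> 0" "\<And>t. t \<in> {a..b} \<Longrightarrow> f t = z"
  shows "log_increment f a b = 0"
  using log_increment_eq[of a b "\<lambda>_. Ln z" f] assms by simp

lemma log_increment_scaled_shift:
  assumes "a \<le> b" "k \<noteq> 0" "continuous_on {a+h..b+h} g" "\<And>t. t \<in> {a+h..b+h} \<Longrightarrow> g t \<noteq> 0"
    and "\<And>t. t \<in> {a..b} \<Longrightarrow> f t = k * g (t + h)"
  shows "log_increment f a b = log_increment g (a + h) (b + h)"
proof -
  obtain L where L: "continuous_on {a+h..b+h} L" "\<And>t. t \<in> {a+h..b+h} \<Longrightarrow> g t = exp (L t)"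
    using continuous_logarithm_on_interval[OF assms(3,4)] by blast
  have "log_increment f a b = L (b + h) + Ln k - (L (a + h) + Ln k)"
  proof (rule log_increment_eq[OF assms(1)])
    show "continuous_on {a..b} (\<lambda>t. L (t + h) + Ln k)"
      by (intro continuous_intros continuous_on_compose2[OF L(1)]) auto
    show "f t = exp (L (t + h) + Ln k)" if "t \<in> {a..b}" for t
      using assms(2) assms(5)[OF that] L(2)[of "t + h"] that by (simp add: exp_add)
  qed
  moreover have "log_increment g (a + h) (b + h) = L (b + h) - L (a + h)"
    by (rule log_increment_eq[OF _ L]) (use assms(1) in simp)
  ultimately show ?thesis
    by simp
qed

lemma log_increment_antipodal:
  assumes "0 < h" "continuous_on {a..a+2*h} f" "\<And>t. t \<in> {a..a+2*h} \<Longrightarrow> f t \<noteq> 0"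
    and "\<And>t. t \<in> {a..a+h} \<Longrightarrow> f (t + h) = - f t"
  shows "log_increment f a (a + 2*h) \<noteq> 0"
proof
  have cont: "continuous_on {a..a+h} f"
    using assms(1,2) by (auto elim: continuous_on_subset)
  have "log_increment f (a + h) (a + 2*h) = log_increment f (a + h + -h) (a + 2*h + -h)"
  proof (rule log_increment_scaled_shift[where k="-1"])
    fix t assume "t \<in> {a + h..a + 2*h}"
    then show "f t = -1 * f (t + -h)"
      using assms(4)[of "t - h"] by simp
  qed (use assms cont in \<open>auto simp: add.commute\<close>)
  then have "log_increment f (a + h) (a + 2*h) = log_increment f a (a + h)"
    by (simp add: algebra_simps)
  moreover assume "log_increment f a (a + 2*h) = 0"
  ultimately have "log_increment f a (a + h) = 0"
    using log_increment_add[of a "a + h" "a + 2*h" f] assms by simp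
  then have "f (a + h) / f a = 1"
    using exp_log_increment[of a "a + h" f] assms(1,3) cont by simp
  then show False
    using assms(1,3) assms(4)[of a] by (simp add: field_simps)
qed

lemma log_increment_homotopic_loops:
  fixes P :: "'a::real_normed_vector set"
  assumes "a \<le> b" "convex P" "continuous_on ({a..b} \<times> P) (\<lambda>(t, s). H t s)"
    and "\<And>t s. t \<in> {a..b} \<Longrightarrow> s \<in> P \<Longrightarrow> H t s \<noteq> 0"
    and "\<And>s. s \<in> P \<Longrightarrow> H b s = H a s" and "\<sigma> \<in> P" "\<tau> \<in> P"
  shows "log_increment (\<lambda>t. H t \<sigma>) a b = log_increment (\<lambda>t. H t \<tau>) a b"
proof -
  have "convex ({a..b} \<times> P)"
    by (intro convex_Times convex_real_interval assms(2))
  moreover have "(\<lambda>(t, s). H t s) z \<noteq> 0" if "z \<in> {a..b} \<times> P" for z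
    using that assms(4) by auto
  ultimately obtain \<Theta> where \<Theta>: "continuous_on ({a..b} \<times> P) \<Theta>"
    "\<And>z. z \<in> {a..b} \<times> P \<Longrightarrow> (\<lambda>(t, s). H t s) z = exp (\<Theta> z)"
    using continuous_logarithm_on_convex[OF _ assms(3)] by blast
  have slice: "log_increment (\<lambda>t. H t s) a b = \<Theta> (b, s) - \<Theta> (a, s)" if "s \<in> P" for s
  proof (rule log_increment_eq[OF assms(1)])
    show "continuous_on {a..b} (\<lambda>t. \<Theta> (t, s))"
      using that by (intro continuous_on_compose2[OF \<Theta>(1)] continuous_intros) auto
  qed (use \<Theta>(2) that in auto)
  have "\<Theta> (b, \<sigma>) - \<Theta> (a, \<sigma>) = \<Theta> (b, \<tau>) - \<Theta> (a, \<tau>)"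
  proof (rule exp_eq_1_continuous_constant[OF convex_connected[OF assms(2)] _ _ assms(6,7)])
    show "continuous_on P (\<lambda>s. \<Theta> (b, s) - \<Theta> (a, s))"
      using assms(1) by (intro continuous_intros continuous_on_compose2[OF \<Theta>(1)]) auto
    show "exp (\<Theta> (b, s) - \<Theta> (a, s)) = 1" if "s \<in> P" for s
      using \<Theta>(2)[of "(a, s)"] \<Theta>(2)[of "(b, s)"] assms(1,4,5) that by (simp add: exp_diff)
  qed
  then show ?thesis
    using slice assms(6,7) by simp
qed

lemma shift_by_of_int_mult:
  fixes F :: "real \<Rightarrow> 'a::real_vector"
  assumes "\<And>t. F (t + p) = F t + w"
  shows "F (t + of_int n * p) = F t + of_int n *\<^sub>R w"
proof (induction n arbitrary: t rule: int_induct[where k=0])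
  case (step1 i)
  have "F (t + of_int (i + 1) * p) = F ((t + of_int i * p) + p)"
    by (simp add: algebra_simps)
  also have "\<dots> = F t + of_int i *\<^sub>R w + w"
    using assms step1 by simp
  finally show ?case
    by (simp add: algebra_simps)
next
  case (step2 i)
  have "F (t + of_int (i - 1) * p) + w = F (t + of_int i * p)"
    using assms[of "t + of_int (i - 1) * p"] by (simp add: algebra_simps)
  also have "\<dots> = F t + of_int i *\<^sub>R w"
    by (rule step2)
  finally show ?case
    by (simp add: algebra_simps)
qed simp

lemma periodic_extension:
  fixes \<gamma> :: "real \<Rightarrow> 'a::topological_space"
  assumes "0 < d" "continuous_on {0..d} \<gamma>" "\<gamma> d = \<gamma> 0"
  obtains G where "continuous_on UNIV G" "\<And>t. G (t + d) = G t" "\<And>t. t \<in> {0..d} \<Longrightarrow> G t = \<gamma> t"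
proof -
  define G where "G t = \<gamma> (t - d * of_int \<lfloor>t / d\<rfloor>)" for t
  have G_shift: "G (t + of_int n * d) = G t" for t n
  proof -
    have "(t + of_int n * d) / d = t / d + of_int n"
      using assms(1) by (simp add: field_simps)
    then show ?thesis
      by (simp add: G_def algebra_simps)
  qed
  have G_eq: "G t = \<gamma> t" if "t \<in> {0..d}" for t
  proof (cases "t = d")
    case True
    then show ?thesis
      using assms(1,3) by (simp add: G_def)
  next
    case False
    with that assms(1) have "\<lfloor>t / d\<rfloor> = 0"
      by (simp add: floor_eq_iff)
    then show ?thesis
      by (simp add: G_def)
  qed
  have "G (t + d) = G t" for t
    using G_shift[of t 1] by simp
  moreover have "continuous_on UNIV G"
  proof (intro continuous_at_imp_continuous_on ballI)
    fix t0 :: real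
    define k where "k = \<lfloor>t0 / d\<rfloor>"
    have "of_int k \<le> t0 / d" "t0 / d < of_int k + 1"
      by (simp_all add: k_def)
    then have k: "of_int k * d \<le> t0" "t0 < of_int k * d + d"
      using assms(1) by (simp_all add: field_simps)
    define I where "I = {of_int (k - 1) * d..of_int (k + 1) * d}"
    have "continuous_on I (\<lambda>t. if t \<le> of_int k * d then \<gamma> (t - of_int (k - 1) * d)
                                 else \<gamma> (t - of_int k * d))"
      unfolding I_def using assms
      by (intro continuous_on_cases_le continuous_on_compose2[OF assms(2)] continuous_intros)
         (auto simp: algebra_simps)
    moreover have "G t = (if t \<le> of_int k * d then \<gamma> (t - of_int (k - 1) * d)
                          else \<gamma> (t - of_int k * d))" if "t \<in> I" for t
      using that G_shift[of "t - of_int (k - 1) * d" "k - 1"] G_shift[of "t - of_int k * d" k]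
        G_eq[of "t - of_int (k - 1) * d"] G_eq[of "t - of_int k * d"]
      by (auto simp: I_def algebra_simps)
    ultimately have "continuous_on I G"
      by (simp add: continuous_on_eq)
    moreover have "t0 \<in> interior I"
      using k assms(1) by (simp add: I_def algebra_simps)
    ultimately show "isCont G t0"
      by (rule continuous_on_interior)
  qed
  ultimately show ?thesis
    using that G_eq by blast
qed

lemma periodic_inj_on_shift_neq:
  fixes G :: "real \<Rightarrow> 'a::real_vector"
  assumes "\<And>t. G (t + d) = G t" "inj_on G {0..<d}" "0 < r" "r < d"
  shows "G (t + r) \<noteq> G t"
proof
  assume eq: "G (t + r) = G t"
  define u where "u = d * frac (t / d)"
  have u: "0 \<le> u" "u < d"
    using assms(3,4) frac_lt_1[of "t / d"] by (simp_all add: u_def)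
  have "t = u + of_int \<lfloor>t / d\<rfloor> * d"
    using assms(3,4) by (simp add: u_def frac_def algebra_simps)
  then have "G (u + r) = G u"
    using eq shift_by_of_int_mult[of G d 0 u "\<lfloor>t / d\<rfloor>"]
      shift_by_of_int_mult[of G d 0 "u + r" "\<lfloor>t / d\<rfloor>"] assms(1)
    by (simp add: algebra_simps)
  show False
  proof (cases "u + r < d")
    case True
    then show False
      using inj_onD[OF assms(2) \<open>G (u + r) = G u\<close>] u assms(3) by simp
  next
    case False
    then have "G (u + r - d) = G u"
      using \<open>G (u + r) = G u\<close> assms(1)[of "u + r - d"] by simp
    then show False
      using inj_onD[OF assms(2)] False u assms(4) by force
  qed
qed

lemma log_increment_secant_neq_0:
  fixes G :: "real \<Rightarrow> complex"
  assumes "continuous_on UNIV G" "\<And>t. G (t + d) = G t" "inj_on G {0..<d}" "0 < r" "r < d"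
  shows "log_increment (\<lambda>t. G (t + r) - G t) 0 d \<noteq> 0"
proof -
  have G_ne: "G (t + s) \<noteq> G t" if "0 < s" "s < d" for t s
    using periodic_inj_on_shift_neq[where G=G, OF assms(2,3) that] .
  have cont: "continuous_on S (\<lambda>(t, s). G (t + s) - G t)" for S
    unfolding case_prod_unfold by (intro continuous_intros continuous_on_compose2[OF assms(1)]) auto
  have cont_secant: "continuous_on S (\<lambda>t. G (t + s) - G t)" for S s
    by (intro continuous_intros continuous_on_compose2[OF assms(1)]) auto
  have "log_increment (\<lambda>t. G (t + r) - G t) 0 d = log_increment (\<lambda>t. G (t + d/2) - G t) 0 d"
  proof (rule log_increment_homotopic_loops[where P="{0<..<d}"])
    show "G (d + s) - G d = G (0 + s) - G 0" for s
      using assms(2)[of s] assms(2)[of 0] by (simp add: add.commute)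
  qed (use assms G_ne cont in auto)
  also have "\<dots> \<noteq> 0"
  proof -
    have "log_increment (\<lambda>t. G (t + d/2) - G t) 0 (0 + 2 * (d/2)) \<noteq> 0"
    proof (rule log_increment_antipodal)
      show "G (t + d/2 + d/2) - G (t + d/2) = - (G (t + d/2) - G t)" for t
        using assms(2)[of t] by (simp add: add.commute)
    qed (use assms G_ne cont_secant in auto)
    then show ?thesis by simp
  qed
  finally show ?thesis .
qed

lemma translation_return_frac:
  fixes F :: "real \<Rightarrow> 'a::real_vector"
  assumes "\<And>t. F (t + 1) = F t + w" "F (u + r) = F u"
  shows "F (frac u + r) = F (frac u)"
proof -
  have "F (frac u + r) = F ((u + r) + of_int (- \<lfloor>u\<rfloor>) * 1)"
    by (simp add: frac_def algebra_simps)
  also have "\<dots> = F (u + of_int (- \<lfloor>u\<rfloor>) * 1)"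
    using assms(2) by (simp only: shift_by_of_int_mult[where F=F and p=1 and w=w, OF assms(1)])
  also have "\<dots> = F (frac u)"
    by (simp add: frac_def)
  finally show ?thesis .
qed

lemma translation_min_return:
  fixes F :: "real \<Rightarrow> 'a::real_normed_vector"
  assumes "continuous_on UNIV F" "\<And>t. F (t + 1) = F t + w"
    and "0 < \<delta>" "\<And>u r. 0 < r \<Longrightarrow> F (u + r) = F u \<Longrightarrow> \<delta> \<le> r"
    and "0 < r0" "F (u0 + r0) = F u0"
  obtains d x where "0 < d" "F (x + d) = F x" "\<And>u r. 0 < r \<Longrightarrow> r < d \<Longrightarrow> F (u + r) \<noteq> F u"
proof -
  define S where "S = ({0..1} \<times> {\<delta>..r0}) \<inter> {p. F (fst p + snd p) = F (fst p)}"
  have "closed {p :: real \<times> real. F (fst p + snd p) = F (fst p)}"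
    by (intro closed_Collect_eq continuous_intros continuous_on_compose2[OF assms(1)]) auto
  then have "compact (snd ` S)"
    unfolding S_def by (intro compact_continuous_image continuous_intros compact_Int_closed compact_Times) auto
  have in_S: "(frac u, r) \<in> S" if "0 < r" "r \<le> r0" "F (u + r) = F u" for u r
    using assms(4)[OF that(1,3)] translation_return_frac[OF assms(2) that(3)] that frac_lt_1[of u]
    by (simp add: S_def less_imp_le)
  then have "snd ` S \<noteq> {}"
    using assms(5,6) by force
  then obtain d where "d \<in> snd ` S" and d_min: "\<And>r. r \<in> snd ` S \<Longrightarrow> d \<le> r"
    using compact_attains_inf[OF \<open>compact (snd ` S)\<close>] by blast
  then obtain x where "(x, d) \<in> S"
    by auto
  then have "0 < d" "d \<le> r0" "F (x + d) = F x"
    using assms(3) by (auto simp: S_def)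
  moreover have "F (u + r) \<noteq> F u" if "0 < r" "r < d" for u r
    using d_min[of r] in_S[of r u] that \<open>d \<le> r0\<close> by force
  ultimately show ?thesis
    using that by blast
qed

lemma log_increment_translation_secant:
  fixes F :: "real \<Rightarrow> complex"
  assumes "continuous_on UNIV F" "\<And>t. F (t + 1) = F t + w" "1 < d"
    and "\<And>u r. 0 < r \<Longrightarrow> r < d \<Longrightarrow> F (u + r) \<noteq> F u" and "0 < s" "s < d"
  shows "log_increment (\<lambda>u. F (u + s) - F u) x (x + 1) = 0"
proof -
  have cont: "continuous_on S (\<lambda>(u, r). F (u + r) - F u)" for S
    unfolding case_prod_unfold by (intro continuous_intros continuous_on_compose2[OF assms(1)]) auto
  have "log_increment (\<lambda>u. F (u + s) - F u) x (x + 1) = log_increment (\<lambda>u. F (u + 1) - F u) x (x + 1)"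
  proof (rule log_increment_homotopic_loops[where P="{0<..<d}"])
    show "F (x + 1 + r) - F (x + 1) = F (x + r) - F x" for r
      using assms(2)[of "x + r"] assms(2)[of x] by (simp add: algebra_simps)
  qed (use assms cont in auto)
  also have "\<dots> = 0"
    by (rule log_increment_const[where z=w]) (use assms(2,3) assms(4)[of 1 x] in auto)
  finally show ?thesis .
qed

lemma log_increment_translation_subloop_secant:
  fixes F G :: "real \<Rightarrow> complex"
  assumes "continuous_on UNIV F" "\<And>t. F (t + 1) = F t + w" "1 < d"
    and "\<And>u r. 0 < r \<Longrightarrow> r < d \<Longrightarrow> F (u + r) \<noteq> F u"
    and "continuous_on UNIV G" "\<And>t. G (t + d) = G t" "\<And>t. t \<in> {0..d} \<Longrightarrow> G t = F (x + t)"
    and "\<And>t. G (t + 1) \<noteq> G t"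
  shows "log_increment (\<lambda>t. G (t + 1) - G t) 0 d = 0"
proof -
  have cont_G: "continuous_on S (\<lambda>t. G (t + 1) - G t)" for S
    by (intro continuous_intros continuous_on_compose2[OF assms(5)]) auto
  have cont_F: "continuous_on S (\<lambda>u. F (u + s) - F u)" for S s
    by (intro continuous_intros continuous_on_compose2[OF assms(1)]) auto
  have "log_increment (\<lambda>t. G (t + 1) - G t) 0 d =
        log_increment (\<lambda>t. G (t + 1) - G t) 0 (d - 1) + log_increment (\<lambda>t. G (t + 1) - G t) (d - 1) d"
    by (rule log_increment_add) (use assms(3,8) cont_G in auto)
  also have "log_increment (\<lambda>t. G (t + 1) - G t) 0 (d - 1) = 0"
  proof (rule log_increment_const[where z=w])
    fix t assume "t \<in> {0..d - 1}"
    then show "G (t + 1) - G t = w"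
      using assms(7)[of t] assms(7)[of "t + 1"] assms(2)[of "x + t"] by (simp add: algebra_simps)
  qed (use assms(2,3) assms(4)[of 1 x] in auto)
  also have "log_increment (\<lambda>t. G (t + 1) - G t) (d - 1) d =
      log_increment (\<lambda>u. F (u + (d - 1)) - F u) (d - 1 + (x + 1 - d)) (d + (x + 1 - d))"
  proof (rule log_increment_scaled_shift[where k="-1"])
    fix t assume t: "t \<in> {d - 1..d}"
    then have "G (t + 1) = F (x + (t + 1 - d))"
      using assms(6)[of "t + 1 - d"] assms(7)[of "t + 1 - d"] assms(3) by simp
    then show "G (t + 1) - G t = -1 * (F (t + (x + 1 - d) + (d - 1)) - F (t + (x + 1 - d)))"
      using t assms(3) assms(7)[of t] by (simp add: algebra_simps)
  qed (use assms(3,4) cont_F in auto)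
  also have "\<dots> = 0"
    using log_increment_translation_secant[where F=F, OF assms(1-4), of "d - 1" x] assms(3)
    by (simp add: algebra_simps)
  finally show ?thesis
    by simp
qed

lemma translation_min_return_le_1:
  fixes F :: "real \<Rightarrow> complex"
  assumes "continuous_on UNIV F" "\<And>t. F (t + 1) = F t + w"
    and "F (x + d) = F x" "\<And>u r. 0 < r \<Longrightarrow> r < d \<Longrightarrow> F (u + r) \<noteq> F u"
  shows "d \<le> 1"
proof (rule ccontr)
  assume "\<not> d \<le> 1"
  then have "1 < d" by simp
  have "continuous_on {0..d} (\<lambda>t. F (x + t))"
    by (intro continuous_on_compose2[OF assms(1)] continuous_intros) auto
  then obtain G where G: "continuous_on UNIV G" "\<And>t. G (t + d) = G t"
    and G_F: "\<And>t. t \<in> {0..d} \<Longrightarrow> G t = F (x + t)"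
    using periodic_extension[of d "\<lambda>t. F (x + t)"] \<open>1 < d\<close> assms(3) by auto
  have "inj_on G {0..<d}"
  proof (rule inj_onI)
    fix a b assume ab: "a \<in> {0..<d}" "b \<in> {0..<d}" "G a = G b"
    then have "F (x + a) = F (x + b)"
      using G_F by simp
    then show "a = b"
      using ab assms(4)[of "b - a" "x + a"] assms(4)[of "a - b" "x + b"]
      by (cases a b rule: linorder_cases) auto
  qed
  then have "G (t + 1) \<noteq> G t" for t
    using periodic_inj_on_shift_neq[where G=G and r=1, OF G(2)] \<open>1 < d\<close> by simp
  then have "log_increment (\<lambda>t. G (t + 1) - G t) 0 d = 0"
    using log_increment_translation_subloop_secant[OF assms(1,2) \<open>1 < d\<close> assms(4) G G_F] by blast
  with log_increment_secant_neq_0[where G=G, OF G \<open>inj_on G {0..<d}\<close>] \<open>1 < d\<close> show False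
    by auto
qed

lemma translation_inj:
  fixes F :: "real \<Rightarrow> complex"
  assumes "continuous_on UNIV F" "\<And>t. F (t + 1) = F t + w"
    and "\<And>a b. 0 \<le> a \<Longrightarrow> a < b \<Longrightarrow> b \<le> 2 \<Longrightarrow> F a = F b \<Longrightarrow> a = 0 \<and> b = 2"
  shows "inj F"
proof (rule injI, rule ccontr)
  fix a b assume "F a = F b" "a \<noteq> b"
  obtain u0 r0 where r0: "0 < r0" "F (u0 + r0) = F u0"
  proof (cases "a < b")
    case True
    then show ?thesis
      using that[of "b - a" a] \<open>F a = F b\<close> by simp
  next
    case False
    then show ?thesis
      using that[of "a - b" b] \<open>F a = F b\<close> \<open>a \<noteq> b\<close> by simp
  qed
  have return_gt_1: "1 < r" if "0 < r" "F (u + r) = F u" for u r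
  proof (rule ccontr)
    assume "\<not> 1 < r"
    then show False
      using assms(3)[of "frac u" "frac u + r"] translation_return_frac[OF assms(2) that(2)]
        frac_lt_1[of u] that(1) by auto
  qed
  obtain d x where "0 < d" "F (x + d) = F x" "\<And>u r. 0 < r \<Longrightarrow> r < d \<Longrightarrow> F (u + r) \<noteq> F u"
  proof (rule translation_min_return[OF assms(1,2) zero_less_one _ r0])
    show "1 \<le> r" if "0 < r" "F (u + r) = F u" for u r
      using return_gt_1[OF that] by simp
  qed auto
  then have "d \<le> 1"
    by (intro translation_min_return_le_1[OF assms(1,2)])
  with return_gt_1 \<open>0 < d\<close> \<open>F (x + d) = F x\<close> show False
    by fastforce
qed

lemma plane_translation_inj:
  fixes l :: "real \<Rightarrow> real \<times> real"
  assumes "continuous_on UNIV l" "\<And>t. l (t + 1) = l t + v"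
    and "\<And>a b. 0 \<le> a \<Longrightarrow> a < b \<Longrightarrow> b \<le> 2 \<Longrightarrow> l a = l b \<Longrightarrow> a = 0 \<and> b = 2"
  shows "inj l"
proof -
  define F where "F t = Complex (fst (l t)) (snd (l t))" for t
  have F_eq_iff: "F a = F b \<longleftrightarrow> l a = l b" for a b
    by (simp add: F_def prod_eq_iff)
  have "inj F"
  proof (rule translation_inj[where w="Complex (fst v) (snd v)"])
    show "continuous_on UNIV F"
      unfolding F_def by (intro continuous_intros assms(1))
    show "F (t + 1) = F t + Complex (fst v) (snd v)" for t
      using assms(2)[of t] by (simp add: F_def complex_eq_iff)
  qed (use assms(3) F_eq_iff in blast)
  then show ?thesis
    by (simp add: inj_def F_eq_iff)
qed

lemma pZ_eqD:
  assumes "pZ p = pZ q"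
  shows "fst p - fst q \<in> \<int>" "snd p = snd q"
proof -
  have "cis (2 * pi * fst p) = cis (2 * pi * fst q)" "snd p = snd q"
    using assms by (auto simp: pZ_def split: prod.splits)
  then have "cis (2 * pi * (fst p - fst q)) = 1"
    using cis_divide[of "2 * pi * fst p" "2 * pi * fst q"] by (simp add: right_diff_distrib)
  then have "cos (2 * pi * (fst p - fst q)) = 1"
    by (simp add: complex_eq_iff)
  then obtain n :: int where "2 * pi * (fst p - fst q) = of_int n * 2 * pi"
    by (auto simp: cos_one_2pi_int)
  then show "fst p - fst q \<in> \<int>"
    by simp
  show "snd p = snd q"
    by fact
qed

lemma pZ_lifts_diff_constant:
  fixes f g :: "'a::topological_space \<Rightarrow> real \<times> real"
  assumes "connected S" "continuous_on S f" "continuous_on S g"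
    and "\<And>s. s \<in> S \<Longrightarrow> pZ (f s) = pZ (g s)" and "a \<in> S" "b \<in> S"
  shows "f a - g a = f b - g b"
proof -
  have "fst (f a) - fst (g a) = fst (f b) - fst (g b)"
    using pZ_eqD(1)[OF assms(4)] assms(5,6)
    by (intro Ints_valued_continuous_constant[OF assms(1)] continuous_intros assms(2,3)) auto
  then show ?thesis
    using pZ_eqD(2)[OF assms(4)] assms(5,6) by (simp add: prod_eq_iff)
qed

lemma joinpaths_self_eq_curve_inf:
  assumes "pathfinish c = pathstart c" "u \<in> {0..1}"
  shows "(c +++ c) u = curve_inf c (2 * u)"
proof -
  have c_frac: "c (frac x) = c x" if "x \<in> {0..1}" for x
    using that assms(1) by (cases "x = 1") (auto simp: frac_eq pathfinish_def pathstart_def)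
  show ?thesis
  proof (cases "u \<le> 1/2")
    case True
    then show ?thesis
      using c_frac[of "2 * u"] assms(2) by (simp add: joinpaths_def curve_inf_def)
  next
    case False
    have "frac (2 * u) = frac (2 * u - 1)"
      using frac_1_eq[of "2 * u - 1"] by simp
    then show ?thesis
      using False c_frac[of "2 * u - 1"] assms(2) by (simp add: joinpaths_def curve_inf_def)
  qed
qed

lemma curve_inf_lift_shift:
  assumes "continuous_on UNIV l" "\<And>t. pZ (l t) = curve_inf c t"
  shows "l (t + 1) = l t + (l 1 - l 0)"
proof -
  have "l (t + 1) - l t = l (0 + 1) - l 0"
  proof (rule pZ_lifts_diff_constant[of UNIV])
    show "continuous_on UNIV (\<lambda>t. l (t + 1))"
      by (intro continuous_on_compose2[OF assms(1)] continuous_intros) auto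
    show "pZ (l (s + 1)) = pZ (l s)" for s
      using assms(2) by (simp add: curve_inf_def frac_1_eq)
  qed (use assms(1) in auto)
  then show ?thesis
    by (metis add_0 add.commute diff_eq_eq)
qed

lemma curve_inf_lift_two_periods:
  assumes "pathfinish c = pathstart c" "continuous_on UNIV l" "\<And>t. pZ (l t) = curve_inf c t"
    and "simple_path g" "\<And>t. t \<in> {0..1} \<Longrightarrow> pZ (g t) = (c +++ c) t"
    and "0 \<le> a" "a < b" "b \<le> 2" "l a = l b"
  shows "a = 0 \<and> b = 2"
proof -
  have g_l: "g y - l (2 * y) = g 0 - l (2 * 0)" if "y \<in> {0..1}" for y
  proof (rule pZ_lifts_diff_constant[of "{0..1}"])
    show "continuous_on {0..1} g"
      using assms(4) by (simp add: simple_path_def path_def)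
    show "continuous_on {0..1} (\<lambda>y. l (2 * y))"
      by (intro continuous_on_compose2[OF assms(2)] continuous_intros) auto
    show "pZ (g s) = pZ (l (2 * s))" if "s \<in> {0..1}" for s
      using assms(3,5) joinpaths_self_eq_curve_inf[OF assms(1)] that by simp
  qed (use that in auto)
  have "g (a / 2) - l a = g (b / 2) - l b"
    using g_l[of "a / 2"] g_l[of "b / 2"] assms(6-8) by simp
  then have "g (a / 2) = g (b / 2)"
    using assms(9) by simp
  moreover have "a / 2 \<in> {0..1}" "b / 2 \<in> {0..1}"
    using assms(6-8) by auto
  ultimately have "a / 2 = b / 2 \<or> a / 2 = 0 \<and> b / 2 = 1 \<or> a / 2 = 1 \<and> b / 2 = 0"
    using assms(4) unfolding simple_path_def loop_free_def by blast
  then show ?thesis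
    using assms(7) by auto
qed

theorem lemma2p1:
  fixes c :: "real \<Rightarrow> complex \<times> real"
  assumes "path c" and "pathfinish c = pathstart c"
    and "path_image c \<subseteq> cylinder"
    and "\<exists>g :: real \<Rightarrow> real \<times> real. path g \<and> (\<forall>t\<in>{0..1}. pZ (g t) = (c +++ c) t)
            \<and> simple_path g"
  shows "\<forall>l :: real \<Rightarrow> real \<times> real. continuous_on UNIV l \<and> pZ \<circ> l = curve_inf c
            \<longrightarrow> inj l"
proof (intro allI impI)
  fix l :: "real \<Rightarrow> real \<times> real"
  assume "continuous_on UNIV l \<and> pZ \<circ> l = curve_inf c"
  then have l: "continuous_on UNIV l" "\<And>t. pZ (l t) = curve_inf c t"
    by (auto simp: fun_eq_iff)
  obtain g where "simple_path g" "\<And>t. t \<in> {0..1} \<Longrightarrow> pZ (g t) = (c +++ c) t"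
    using assms(4) by blast
  then show "inj l"
    using plane_translation_inj[OF l(1) curve_inf_lift_shift[OF l]]
      curve_inf_lift_two_periods[OF assms(2) l] by blast
qed

end
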